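(* Let $R$ be the tropicalized whurl map defined in the context. Identify a carrier state $(a,b,c)$ with $(x^{(1)},x^{(2)},x^{(3)})$ and a site state $(d,e,f)$ with $(y^{(1)},y^{(2)},y^{(3)})$. Then for all nonnegative integers $b,c,d,e,f$ with $d=e-f+1$, for all sufficiently large $a$ one has $(x'^{(1)},x'^{(2)},x'^{(3)})=(d',e',f')$ and $(y'^{(2)},y'^{(3)})=(b',c')$, where $d',e',f',b',c'$ are given by the $T_\infty$ carrier formulas $d'=d+b+f-\min(e+c,d+c,d+b)$, $e'=e+b-\min(d,e)$, $f'=\min(e+c,d+c,d+b)-\min(d,e)$, $b'=\min(d,e)$, $c'=c+f+\min(d,e)-\min(e+c,d+c,d+b)$; moreover $y'^{(1)}\to\infty$ as $a\to\infty$. That is, the carrier action of the box-basket-ball system is the tropicalization of the three-wire whurl relation with $x^{(1)}=\infty$.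
   Context: The tropicalization (replacing $+$ by $\min$, $\times$ by $+$, $\div$ by $-$) of the whurl relation for a cylinder with three horizontal wires (two oriented right, one left) and two whurls is the map $(x^{(1)},x^{(2)},x^{(3)};y^{(1)},y^{(2)},y^{(3)})\mapsto(x'^{(1)},x'^{(2)},x'^{(3)};y'^{(1)},y'^{(2)},y'^{(3)})$ given by, writing $P=\min(x^{(1)}+x^{(2)},x^{(1)}+x^{(3)},x^{(2)}+y^{(3)})$, $Q=\min(y^{(2)}+x^{(3)},y^{(1)}+x^{(3)},y^{(1)}+x^{(2)})$, $W=\min(x^{(1)}+y^{(2)},y^{(1)}+y^{(3)},y^{(2)}+y^{(3)})$: $x'^{(1)}=y^{(1)}+P-Q$, $x'^{(2)}=y^{(2)}+P-W$, $x'^{(3)}=y^{(3)}+Q-W$, $y'^{(1)}=x^{(1)}+Q-P$, $y'^{(2)}=x^{(2)}+W-P$, $y'^{(3)}=x^{(3)}+W-Q$. A site state of the box-basket-ball system is a triple $(d,e,f)$ of nonnegative integers with $d=e-f+1$ ($e$ baskets, $f$ balls, one box). *)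

theory Defs
  imports Main
begin

definition trop_P :: "int \<Rightarrow> int \<Rightarrow> int \<Rightarrow> int \<Rightarrow> int \<Rightarrow> int \<Rightarrow> int" where
  "trop_P x1 x2 x3 y1 y2 y3 = min (x1 + x2) (min (x1 + x3) (x2 + y3))"

definition trop_Q :: "int \<Rightarrow> int \<Rightarrow> int \<Rightarrow> int \<Rightarrow> int \<Rightarrow> int \<Rightarrow> int" where
  "trop_Q x1 x2 x3 y1 y2 y3 = min (y2 + x3) (min (y1 + x3) (y1 + x2))"

definition trop_W :: "int \<Rightarrow> int \<Rightarrow> int \<Rightarrow> int \<Rightarrow> int \<Rightarrow> int \<Rightarrow> int" where
  "trop_W x1 x2 x3 y1 y2 y3 = min (x1 + y2) (min (y1 + y3) (y2 + y3))"

definition whurl_trop ::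
  "int \<times> int \<times> int \<Rightarrow> int \<times> int \<times> int \<Rightarrow> (int \<times> int \<times> int) \<times> (int \<times> int \<times> int)" where
  "whurl_trop x y = (case x of (x1, x2, x3) \<Rightarrow> case y of (y1, y2, y3) \<Rightarrow>
     (let P = trop_P x1 x2 x3 y1 y2 y3; Q = trop_Q x1 x2 x3 y1 y2 y3; W = trop_W x1 x2 x3 y1 y2 y3
      in ((y1 + P - Q, y2 + P - W, y3 + Q - W), (x1 + Q - P, x2 + W - P, x3 + W - Q))))"

end

theory Submission
  imports Defs
begin

(* The proof rests on one observation:
   once x1 is large, the two minima P and W containing x1 are attained at
   terms free of x1, namely P = x2 + y3 and W = min y1 y2 + y3, while Q does
   not involve x1 at all.
   Specialising to the carrier state (a,b,c) and site state (d,e,f), the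
   regime is entered as soon as a >= b + f; this gives the T_infinity
   carrier formulas, and eventually_shift_at_top turns y1' = a + const into
   divergence to infinity. *)

lemma whurl_trop_large_x1:
  fixes x1 x2 x3 y1 y2 y3 :: int
  defines "Q \<equiv> min (y2 + x3) (min (y1 + x3) (y1 + x2))"
  assumes "y3 \<le> x1" and "x2 + y3 \<le> x1 + x3" and "min y1 y2 + y3 \<le> x1 + y2"
  shows "whurl_trop (x1, x2, x3) (y1, y2, y3) =
    ((y1 + x2 + y3 - Q, y2 + x2 - min y1 y2, Q - min y1 y2),
     (x1 + Q - (x2 + y3), min y1 y2, x3 + min y1 y2 + y3 - Q))"
proof -
  have P: "trop_P x1 x2 x3 y1 y2 y3 = x2 + y3"
    using assms(2,3) unfolding trop_P_def by simp
  have W: "trop_W x1 x2 x3 y1 y2 y3 = min y1 y2 + y3"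
    using assms(4) unfolding trop_W_def min_def by auto
  show ?thesis
    unfolding whurl_trop_def Let_def trop_Q_def Q_def by (simp add: P W)
qed

lemma eventually_shift_at_top:
  fixes g :: "'a::linordered_ab_group_add \<Rightarrow> 'a"
  assumes "eventually (\<lambda>x. g x = x + k) at_top"
  shows "filterlim g at_top at_top"
  unfolding filterlim_at_top
proof
  fix Z :: 'a
  show "eventually (\<lambda>x. Z \<le> g x) at_top"
    using assms eventually_ge_at_top[of "Z - k"]
    by eventually_elim (simp add: algebra_simps)
qed

theorem mainTheorem3:
  fixes b c d e f :: int
  assumes "b \<ge> 0" "c \<ge> 0" "d \<ge> 0" "e \<ge> 0" "f \<ge> 0" "d = e - f + 1"
  shows "(\<exists>A::int. \<forall>a\<ge>A.
            fst (whurl_trop (a, b, c) (d, e, f)) =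
              (d + b + f - min (e + c) (min (d + c) (d + b)),
               e + b - min d e,
               min (e + c) (min (d + c) (d + b)) - min d e)
          \<and> snd (snd (whurl_trop (a, b, c) (d, e, f))) =
              (min d e,
               c + f + min d e - min (e + c) (min (d + c) (d + b))))
       \<and> filterlim (\<lambda>a::int. fst (snd (whurl_trop (a, b, c) (d, e, f)))) at_top at_top"
proof -
  let ?Q = "min (e + c) (min (d + c) (d + b))"
  have regime: "whurl_trop (a, b, c) (d, e, f) =
      ((d + b + f - ?Q, e + b - min d e, ?Q - min d e),
       (a + ?Q - (b + f), min d e, c + min d e + f - ?Q))"
    if "a \<ge> b + f" for a
    using that assms(1,2,4) by (subst whurl_trop_large_x1) (auto simp: min_def)
  have "eventually (\<lambda>a. fst (snd (whurl_trop (a, b, c) (d, e, f))) = a + (?Q - (b + f))) at_top"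
    using eventually_ge_at_top[of "b + f"] by eventually_elim (simp add: regime)
  then have "filterlim (\<lambda>a. fst (snd (whurl_trop (a, b, c) (d, e, f)))) at_top at_top"
    by (rule eventually_shift_at_top)
  moreover have "\<forall>a\<ge>b + f. fst (whurl_trop (a, b, c) (d, e, f)) =
      (d + b + f - ?Q, e + b - min d e, ?Q - min d e)
    \<and> snd (snd (whurl_trop (a, b, c) (d, e, f))) = (min d e, c + f + min d e - ?Q)"
    by (simp add: regime algebra_simps)
  ultimately show ?thesis by blast
qed

end
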